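(* Let $f:\{0,1\}^n\to\{0,1\}$ be an arbitrary symmetric Boolean function. Then \[D(f)\le O\!\left(\max\{\mathsf N(f)^6,\mathsf N(\overline f)^6\}\right).\]
   Context: $\mathsf N(f)$ is the minimum degree of a real polynomial $p$ with $|p(x)|\le1/3$ whenever $f(x)=0$ and $|p(x)|\ge1$ whenever $f(x)=1$; $\overline f=1-f$. $f$ is symmetric if $f(x)=f(x')$ whenever $x,x'$ have the same Hamming weight. $D(f)$ is deterministic decision tree complexity. Constants in $O(\cdot)$ are absolute. *)

theory Defs
  imports Complex_Main
begin

text \<open>Inputs in {0,1}^n are boolean lists of length n (True = 1).
  A Boolean function is f :: bool list => bool, considered on lists of length n.\<close>

definition hamming_weight :: "bool list \<Rightarrow> nat" where
  "hamming_weight x = length (filter id x)"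

definition symmetric_fun :: "nat \<Rightarrow> (bool list \<Rightarrow> bool) \<Rightarrow> bool" where
  "symmetric_fun n f \<longleftrightarrow> (\<forall>x y. length x = n \<longrightarrow> length y = n \<longrightarrow>
      hamming_weight x = hamming_weight y \<longrightarrow> f x = f y)"

datatype dtree = Leaf bool | Node nat dtree dtree

fun dt_eval :: "dtree \<Rightarrow> bool list \<Rightarrow> bool" where
  "dt_eval (Leaf b) x = b"
| "dt_eval (Node i t0 t1) x = (if x ! i then dt_eval t1 x else dt_eval t0 x)"

fun dt_depth :: "dtree \<Rightarrow> nat" where
  "dt_depth (Leaf b) = 0"
| "dt_depth (Node i t0 t1) = Suc (max (dt_depth t0) (dt_depth t1))"

fun dt_valid :: "nat \<Rightarrow> dtree \<Rightarrow> bool" where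
  "dt_valid n (Leaf b) = True"
| "dt_valid n (Node i t0 t1) = (i < n \<and> dt_valid n t0 \<and> dt_valid n t1)"

definition D :: "nat \<Rightarrow> (bool list \<Rightarrow> bool) \<Rightarrow> nat" where
  "D n f = (LEAST d. \<exists>t. dt_valid n t \<and> dt_depth t = d \<and>
                        (\<forall>x. length x = n \<longrightarrow> dt_eval t x = f x))"

text \<open>Real polynomials on {0,1}^n, in multilinear form (every real polynomial agrees on the
  cube with a multilinear one of no larger degree): coefficient c S for monomial prod_{i in S} x_i,
  S a subset of {0..<n}.\<close>

definition mpoly_eval :: "nat \<Rightarrow> (nat set \<Rightarrow> real) \<Rightarrow> bool list \<Rightarrow> real" where
  "mpoly_eval n c x = (\<Sum>S\<in>Pow {0..<n}. c S * (\<Prod>i\<in>S. (if x ! i then 1 else 0)))"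

definition mpoly_deg_le :: "nat \<Rightarrow> (nat set \<Rightarrow> real) \<Rightarrow> nat \<Rightarrow> bool" where
  "mpoly_deg_le n c d \<longleftrightarrow> (\<forall>S\<in>Pow {0..<n}. c S \<noteq> 0 \<longrightarrow> card S \<le> d)"

definition N :: "nat \<Rightarrow> (bool list \<Rightarrow> bool) \<Rightarrow> nat" where
  "N n f = (LEAST d. \<exists>c. mpoly_deg_le n c d \<and>
      (\<forall>x. length x = n \<longrightarrow>
          (\<not> f x \<longrightarrow> \<bar>mpoly_eval n c x\<bar> \<le> 1/3) \<and>
          (f x \<longrightarrow> \<bar>mpoly_eval n c x\<bar> \<ge> 1)))"

end

(* Squaring a degree-d approximation of f and averaging it over each slice of the cube gives a
   univariate polynomial of degree at most 2d that is at least 1 at the Hamming weights where f is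
   true and at most 1/9 in absolute value at the others; the same holds for the complement of f.
   By the intermediate value theorem, f changes value at most 2d times along the weights 0..n.
   Lagrange interpolation at the nodes s + 1 + 4 i^2, i <= 2d (or at their mirror images below s)
   bounds a polynomial at s by six times its maximum at the nodes, so the polynomial that is at
   least 1 at a weight s cannot be at most 1/9 at all of them: every weight lies within 4 (2d)^2 of
   a change. Hence a non-constant f has n + 1 <= 2d (32 d^2 + 1), and D(f) <= n = O(d^3). *)

theory Submission
  imports Defs "HOL-Computational_Algebra.Polynomial"
begin

section \<open>Lagrange interpolation at quadratically spaced nodes\<close>

lemma poly_eq_lagrange_sum:
  fixes p :: "'a::field poly" and a :: "nat \<Rightarrow> 'a"
  assumes deg: "degree p \<le> n" and inj: "inj_on a {..n}"
  shows "poly p z = (\<Sum>i\<le>n. poly p (a i) * (\<Prod>k\<in>{..n}-{i}. (z - a k) / (a i - a k)))"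
proof -
  define L where "L = (\<Sum>i\<le>n. smult (poly p (a i) / (\<Prod>k\<in>{..n}-{i}. a i - a k))
                        (\<Prod>k\<in>{..n}-{i}. [:- a k, 1:]))"
  have poly_L: "poly L x = (\<Sum>i\<le>n. poly p (a i) * (\<Prod>k\<in>{..n}-{i}. (x - a k) / (a i - a k)))" for x
    by (simp add: L_def poly_sum poly_prod prod_dividef)
  have degree_L: "degree L \<le> n"
    unfolding L_def
  proof (intro degree_sum_le)
    fix i assume "i \<in> {..n}"
    have "degree (\<Prod>k\<in>{..n}-{i}. [:- a k, 1:]) = n"
      using \<open>i \<in> {..n}\<close> by (subst degree_prod_sum_eq) auto
    thus "degree (smult (poly p (a i) / (\<Prod>k\<in>{..n}-{i}. a i - a k))
                   (\<Prod>k\<in>{..n}-{i}. [:- a k, 1:])) \<le> n"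
      by (metis degree_smult_le)
  qed simp
  have agree: "poly p x = poly L x" if "x \<in> a ` {..n}" for x
  proof -
    from that obtain j where j: "j \<le> n" "x = a j" by auto
    have basis: "(\<Prod>k\<in>{..n}-{i}. (a j - a k) / (a i - a k)) = of_bool (i = j)" if "i \<le> n" for i
    proof (cases "i = j")
      case True
      have "a i \<noteq> a k" if "k \<in> {..n}-{i}" for k
        using inj \<open>i \<le> n\<close> that by (auto dest: inj_onD)
      thus ?thesis using True by (intro trans[OF prod.neutral]) auto
    next
      case False
      thus ?thesis using j by (intro trans[OF prod_zero]) (auto intro!: bexI[of _ j])
    qed
    show ?thesis using j by (simp add: poly_L basis)
  qed
  have card: "card (a ` {..n}) = Suc n"
    using inj by (simp add: card_image)
  have "degree p < card (a ` {..n})" "degree L < card (a ` {..n})"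
    using deg degree_L unfolding card by simp_all
  with agree have "p = L"
    by (rule poly_eqI_degree)
  thus ?thesis unfolding poly_L[symmetric] by simp
qed

lemma prod_lessThan_diff_eq_fact: "(\<Prod>k<i. real i - real k) = fact i"
proof -
  have "fact i = (\<Prod>k=0..<i. real (i - k))"
    by (simp add: fact_prod_rev of_nat_prod)
  also have "\<dots> = (\<Prod>k<i. real i - real k)"
    by (intro prod.cong) (auto simp: of_nat_diff atLeast0LessThan)
  finally show ?thesis by simp
qed

lemma fact_mult_prod_lessThan_add:
  assumes "1 \<le> i"
  shows "fact (i - 1) * (\<Prod>k<m. real i + real k) = fact (i - 1 + m)"
proof -
  have "fact (i - 1 + m) = (fact (i - 1) :: real) * pochhammer (1 + real (i - 1)) m"
    by (simp add: pochhammer_fact pochhammer_product')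
  thus ?thesis using assms by (simp add: pochhammer_prod of_nat_diff atLeast0LessThan)
qed

lemma prod_lessThan_diff_squares:
  assumes "1 \<le> i"
  shows "2 * (\<Prod>k<i. real i ^ 2 - real k ^ 2) = fact (2 * i)"
proof -
  have "(\<Prod>k<i. real i ^ 2 - real k ^ 2) = (\<Prod>k<i. (real i - real k) * (real i + real k))"
    by (intro prod.cong) (auto simp: power2_eq_square algebra_simps)
  also have "\<dots> = real i * (fact (i - 1) * (\<Prod>k<i. real i + real k))"
    using assms by (simp add: prod.distrib prod_lessThan_diff_eq_fact fact_reduce[of i])
  also have "\<dots> = real i * fact (2 * i - 1)"
    using fact_mult_prod_lessThan_add[OF assms, of i] assms by (simp add: mult_2)
  finally show ?thesis
    using assms fact_reduce[of "2 * i", where 'a = real] by simp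
qed

lemma prod_abs_diff_squares:
  assumes "1 \<le> i" "i \<le> n"
  shows "2 * (\<Prod>k\<in>{..n}-{i}. \<bar>real i ^ 2 - real k ^ 2\<bar>) = fact (n - i) * fact (n + i)"
  using assms(2)
proof (induction n rule: dec_induct)
  case base
  have "(\<Prod>k\<in>{..i}-{i}. \<bar>real i ^ 2 - real k ^ 2\<bar>) = (\<Prod>k<i. real i ^ 2 - real k ^ 2)"
    by (rule prod.cong) (auto intro: power_mono)
  thus ?case
    using prod_lessThan_diff_squares[OF assms(1)] by (simp only: mult_2 diff_self_eq_0 fact_0 mult_1)
next
  case (step n)
  have "{..Suc n}-{i} = insert (Suc n) ({..n}-{i})" using step by auto
  hence "2 * (\<Prod>k\<in>{..Suc n}-{i}. \<bar>real i ^ 2 - real k ^ 2\<bar>)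
      = \<bar>real i ^ 2 - real (Suc n) ^ 2\<bar> * (fact (n - i) * fact (n + i))"
    using step.IH by simp
  also have "\<bar>real i ^ 2 - real (Suc n) ^ 2\<bar> = (real (Suc n) - real i) * (real (Suc n) + real i)"
  proof -
    have "real i ^ 2 < real (Suc n) ^ 2" using step.hyps by (intro power_strict_mono) auto
    thus ?thesis by (simp add: power2_eq_square algebra_simps)
  qed
  also have "\<dots> * (fact (n - i) * fact (n + i)) = fact (Suc n - i) * fact (Suc n + i)"
  proof -
    have "Suc n - i = Suc (n - i)" using step.hyps by simp
    hence "(fact (Suc n - i) :: real) = (real (Suc n) - real i) * fact (n - i)"
      using step.hyps by (simp add: of_nat_diff)
    thus ?thesis by (simp add: ac_simps)
  qed
  finally show ?case .
qed

lemma fact_square_le_fact_mult_fact: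
  "i \<le> n \<Longrightarrow> (fact n :: real) ^ 2 \<le> fact (n - i) * fact (n + i)"
proof (induction i)
  case 0
  thus ?case by (simp add: power2_eq_square)
next
  case (Suc i)
  have "n - i = Suc (n - Suc i)" using Suc.prems by simp
  hence "fact (n - i) * fact (n + i) = real (n - i) * (fact (n - Suc i) * fact (n + i) :: real)"
    by simp
  also have "\<dots> \<le> real (n + Suc i) * (fact (n - Suc i) * fact (n + i))"
    by (intro mult_right_mono) auto
  also have "\<dots> = fact (n - Suc i) * fact (n + Suc i)"
    by simp
  finally show ?case using Suc.IH Suc.prems by (meson Suc_leD order_trans)
qed

lemma fact_square_le_prod_abs_diff_squares:
  assumes "i \<le> n"
  shows "(fact n :: real) ^ 2 \<le> 2 * (\<Prod>k\<in>{..n}-{i}. \<bar>real i ^ 2 - real k ^ 2\<bar>)"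
proof (cases "i = 0")
  case True
  have "{..n}-{0} = {1..n}" by auto
  hence "(\<Prod>k\<in>{..n}-{i}. \<bar>real i ^ 2 - real k ^ 2\<bar>) = (fact n) ^ 2"
    using True by (simp add: fact_prod prod_power_distrib)
  thus ?thesis by simp
next
  case False
  thus ?thesis using prod_abs_diff_squares[of i n] fact_square_le_fact_mult_fact[OF assms] assms
    by simp
qed

(* Quadratic spacing makes the Lagrange weights at 0 decay like 1 / quad_node i. *)
definition quad_node :: "nat \<Rightarrow> real" where
  "quad_node k = 1 + 4 * real k ^ 2"

lemma quad_node_pos: "quad_node k > 0"
  by (simp add: quad_node_def add_pos_nonneg)

lemma inj_quad_node: "inj quad_node"
  by (auto simp: inj_on_def quad_node_def)

lemma prod_quad_node_le:
  "(\<Prod>k\<le>n. quad_node k) \<le> (2 - 1 / (real n + 1)) * 4 ^ n * (fact n) ^ 2"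
proof (induction n)
  case 0
  thus ?case by (simp add: quad_node_def)
next
  case (Suc n)
  define x where "x = real n + 1"
  have x: "x \<ge> 1" by (simp add: x_def)
  have step: "(2 - 1 / x) * (1 + 4 * x ^ 2) \<le> (2 - 1 / (x + 1)) * (4 * x ^ 2)"
  proof -
    have "(2 - 1 / x) * (1 + 4 * x ^ 2) = 8 * x ^ 2 - 4 * x + 2 - 1 / x"
      using x by (simp add: field_simps power2_eq_square)
    moreover have "(2 - 1 / (x + 1)) * (4 * x ^ 2) = 8 * x ^ 2 - 4 * x + 4 * x / (x + 1)"
      using x by (simp add: field_simps power2_eq_square)
    moreover have "2 \<le> 4 * x / (x + 1)" using x by (simp add: field_simps)
    moreover have "0 < 1 / x" using x by simp
    ultimately show ?thesis by linarith
  qed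
  have "(\<Prod>k\<le>Suc n. quad_node k) = (\<Prod>k\<le>n. quad_node k) * (1 + 4 * x ^ 2)"
    by (simp add: quad_node_def x_def)
  also have "\<dots> \<le> (2 - 1 / x) * 4 ^ n * (fact n) ^ 2 * (1 + 4 * x ^ 2)"
    using Suc.IH unfolding x_def by (rule mult_right_mono) simp
  also have "\<dots> = ((2 - 1 / x) * (1 + 4 * x ^ 2)) * (4 ^ n * (fact n) ^ 2)"
    by (simp only: ac_simps)
  also have "\<dots> \<le> ((2 - 1 / (x + 1)) * (4 * x ^ 2)) * (4 ^ n * (fact n) ^ 2)"
    using step by (rule mult_right_mono) simp
  also have "\<dots> = (2 - 1 / (real (Suc n) + 1)) * 4 ^ Suc n * (fact (Suc n)) ^ 2"
  proof -
    have "(fact (Suc n) :: real) = x * fact n" "real (Suc n) + 1 = x + 1"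
      by (simp_all add: x_def)
    thus ?thesis by (simp only: power_mult_distrib power_Suc ac_simps)
  qed
  finally show ?case .
qed

lemma sum_inverse_quad_node_le: "(\<Sum>k\<le>n. 1 / quad_node k) \<le> 3 / 2 - 1 / (2 * (real n + 1))"
proof (induction n)
  case 0
  thus ?case by (simp add: quad_node_def)
next
  case (Suc n)
  define x where "x = real n + 1"
  have x: "x \<ge> 1" by (simp add: x_def)
  have "x \<le> x * x" using x by simp
  hence "2 * x * (x + 1) \<le> 1 + 4 * x ^ 2" by (simp add: power2_eq_square algebra_simps)
  hence "1 / (1 + 4 * x ^ 2) \<le> 1 / (2 * x * (x + 1))"
    using x by (intro divide_left_mono) (auto intro!: mult_pos_pos add_pos_nonneg)
  also have "\<dots> = 1 / (2 * x) - 1 / (2 * (x + 1))"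
    using x by (simp add: field_simps)
  finally have "1 / (1 + 4 * x ^ 2) \<le> 1 / (2 * x) - 1 / (2 * (x + 1))" .
  moreover have "(\<Sum>k\<le>Suc n. 1 / quad_node k) = (\<Sum>k\<le>n. 1 / quad_node k) + 1 / (1 + 4 * x ^ 2)"
    by (simp add: quad_node_def x_def)
  moreover have "real (Suc n) + 1 = x + 1" by (simp add: x_def)
  ultimately show ?case using Suc.IH unfolding x_def by simp
qed

lemma lagrange_weight_quad_node_le:
  assumes "i \<le> n"
  shows "(\<Prod>k\<in>{..n}-{i}. quad_node k / \<bar>quad_node i - quad_node k\<bar>) \<le> 4 / quad_node i"
proof -
  define G where "G = (\<Prod>k\<in>{..n}-{i}. \<bar>real i ^ 2 - real k ^ 2\<bar>)"
  have G: "(fact n :: real) ^ 2 \<le> 2 * G"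
    unfolding G_def using assms by (rule fact_square_le_prod_abs_diff_squares)
  moreover have "(fact n :: real) ^ 2 > 0" by simp
  ultimately have "G > 0" by linarith
  have "(\<Prod>k\<le>n. quad_node k) = quad_node i * (\<Prod>k\<in>{..n}-{i}. quad_node k)"
    using assms by (subst prod.remove[of _ i]) auto
  moreover have "(\<Prod>k\<in>{..n}-{i}. \<bar>quad_node i - quad_node k\<bar>) = 4 ^ n * G"
  proof -
    have "quad_node i - quad_node k = 4 * (real i ^ 2 - real k ^ 2)" for k
      by (simp add: quad_node_def algebra_simps)
    hence "(\<Prod>k\<in>{..n}-{i}. \<bar>quad_node i - quad_node k\<bar>) = (\<Prod>k\<in>{..n}-{i}. 4 * \<bar>real i ^ 2 - real k ^ 2\<bar>)"
      by (simp only: abs_mult abs_numeral)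
    thus ?thesis using assms by (simp add: prod.distrib G_def)
  qed
  ultimately have "(\<Prod>k\<in>{..n}-{i}. quad_node k / \<bar>quad_node i - quad_node k\<bar>)
      = (\<Prod>k\<le>n. quad_node k) / (quad_node i * (4 ^ n * G))"
    using quad_node_pos[of i] by (simp add: prod_dividef)
  also have "\<dots> \<le> (4 * (4 ^ n * G)) / (quad_node i * (4 ^ n * G))"
  proof (rule divide_right_mono)
    have "2 * 4 ^ n * (fact n) ^ 2 \<le> 2 * 4 ^ n * (2 * G)"
      using G by (intro mult_left_mono) auto
    moreover have "(2 - 1 / (real n + 1)) * 4 ^ n * (fact n) ^ 2 \<le> 2 * 4 ^ n * (fact n) ^ 2"
      by (intro mult_right_mono) auto
    ultimately show "(\<Prod>k\<le>n. quad_node k) \<le> 4 * (4 ^ n * G)"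
      using prod_quad_node_le[of n] by linarith
  qed (use quad_node_pos[of i] \<open>G > 0\<close> in simp)
  also have "\<dots> = 4 / quad_node i"
    using \<open>G > 0\<close> by simp
  finally show ?thesis .
qed

lemma abs_poly_0_le_at_quad_nodes:
  fixes p :: "real poly"
  assumes deg: "degree p \<le> n" and small: "\<And>i. i \<le> n \<Longrightarrow> \<bar>poly p (quad_node i)\<bar> \<le> \<epsilon>"
  shows "\<bar>poly p 0\<bar> \<le> 6 * \<epsilon>"
proof -
  have "0 \<le> \<epsilon>"
    using small[of 0] by simp
  have "poly p 0 = (\<Sum>i\<le>n. poly p (quad_node i) *
           (\<Prod>k\<in>{..n}-{i}. (0 - quad_node k) / (quad_node i - quad_node k)))"
    using deg inj_quad_node by (intro poly_eq_lagrange_sum) (auto intro: inj_on_subset)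
  also have "\<bar>\<dots>\<bar> \<le> (\<Sum>i\<le>n. \<epsilon> * (4 / quad_node i))"
  proof (rule order_trans[OF sum_abs sum_mono])
    fix i assume "i \<in> {..n}"
    have "\<bar>\<Prod>k\<in>{..n}-{i}. (0 - quad_node k) / (quad_node i - quad_node k)\<bar>
        = (\<Prod>k\<in>{..n}-{i}. quad_node k / \<bar>quad_node i - quad_node k\<bar>)"
      using quad_node_pos by (simp add: abs_prod abs_divide abs_of_pos)
    also have "\<dots> \<le> 4 / quad_node i"
      using \<open>i \<in> {..n}\<close> by (simp add: lagrange_weight_quad_node_le)
    finally show "\<bar>poly p (quad_node i) * (\<Prod>k\<in>{..n}-{i}. (0 - quad_node k) / (quad_node i - quad_node k))\<bar>
        \<le> \<epsilon> * (4 / quad_node i)"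
      unfolding abs_mult using small \<open>i \<in> {..n}\<close> \<open>0 \<le> \<epsilon>\<close> by (intro mult_mono) auto
  qed
  also have "\<dots> = 4 * \<epsilon> * (\<Sum>i\<le>n. 1 / quad_node i)"
    by (simp add: sum_distrib_left mult.commute)
  also have "\<dots> \<le> 4 * \<epsilon> * (3 / 2)"
  proof (rule mult_left_mono)
    have "0 \<le> 1 / (2 * (real n + 1))" by simp
    thus "(\<Sum>i\<le>n. 1 / quad_node i) \<le> 3 / 2"
      using sum_inverse_quad_node_le[of n] by linarith
  qed (use \<open>0 \<le> \<epsilon>\<close> in simp)
  finally show ?thesis by simp
qed

lemma abs_poly_le_at_quad_nodes:
  fixes p :: "real poly"
  assumes deg: "degree p \<le> n" and small: "\<And>i. i \<le> n \<Longrightarrow> \<bar>poly p (x + c * quad_node i)\<bar> \<le> \<epsilon>"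
  shows "\<bar>poly p x\<bar> \<le> 6 * \<epsilon>"
proof -
  define r where "r = p \<circ>\<^sub>p [:x, c:]"
  have poly_r: "poly r u = poly p (x + c * u)" for u
    by (simp add: r_def poly_pcompose mult.commute)
  have "degree r \<le> degree p * degree [:x, c:]"
    unfolding r_def by (rule degree_pcompose_le)
  also have "\<dots> \<le> n"
    using deg by (cases "c = 0") auto
  finally have "\<bar>poly r 0\<bar> \<le> 6 * \<epsilon>"
    by (rule abs_poly_0_le_at_quad_nodes) (simp add: poly_r small)
  thus ?thesis by (simp add: poly_r)
qed

section \<open>Polynomials separating the levels 0..n\<close>

(* 1/9 = (1/3)^2: separating polynomials arise by squaring approximating ones. *)
definition separates_levels :: "real poly \<Rightarrow> nat \<Rightarrow> (nat \<Rightarrow> bool) \<Rightarrow> bool" where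
  "separates_levels p n F \<longleftrightarrow>
     (\<forall>k\<le>n. (F k \<longrightarrow> 1 \<le> poly p (real k)) \<and> (\<not> F k \<longrightarrow> \<bar>poly p (real k)\<bar> \<le> 1 / 9))"

definition level_changes :: "(nat \<Rightarrow> bool) \<Rightarrow> nat \<Rightarrow> nat set" where
  "level_changes F n = {t. t < n \<and> F t \<noteq> F (Suc t)}"

lemma card_level_changes_le_degree:
  assumes sep: "separates_levels p n F"
  shows "card (level_changes F n) \<le> degree p"
proof -
  define h where "h = p - [:1 / 2:]"
  have sign: "if F k then poly h (real k) > 0 else poly h (real k) < 0" if "k \<le> n" for k
    using sep that by (auto simp: separates_levels_def h_def)
  have "h \<noteq> 0"
    using sign[of 0] by (auto split: if_splits)
  have "\<exists>r. real t < r \<and> r < real (Suc t) \<and> poly h r = 0" if "t \<in> level_changes F n" for t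
  proof -
    have "t < n" "F t \<noteq> F (Suc t)" using that by (auto simp: level_changes_def)
    hence "poly h (real t) > 0 \<and> poly h (real (Suc t)) < 0 \<or> poly h (real t) < 0 \<and> poly h (real (Suc t)) > 0"
      using sign[of t] sign[of "Suc t"] by (auto split: if_splits)
    thus ?thesis using poly_IVT_pos[of "real t"] poly_IVT_neg[of "real t"] by force
  qed
  then obtain root where root: "\<And>t. t \<in> level_changes F n \<Longrightarrow>
      real t < root t \<and> root t < real (Suc t) \<and> poly h (root t) = 0"
    by metis
  have "inj_on root (level_changes F n)"
  proof (rule inj_onI)
    fix s t assume "s \<in> level_changes F n" "t \<in> level_changes F n" "root s = root t"
    with root[of s] root[of t] have "real s < real (Suc t)" "real t < real (Suc s)" by auto
    thus "s = t" by simp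
  qed
  hence "card (level_changes F n) = card (root ` level_changes F n)"
    by (simp add: card_image)
  also have "\<dots> \<le> card {r. poly h r = 0}"
    using root \<open>h \<noteq> 0\<close> by (intro card_mono poly_roots_finite) auto
  also have "\<dots> \<le> degree h"
    using \<open>h \<noteq> 0\<close> by (rule card_poly_roots_bound)
  also have "\<dots> \<le> degree p"
    unfolding h_def by (rule degree_diff_le) simp_all
  finally show ?thesis .
qed

lemma small_run_below_le:
  fixes Q :: "real poly"
  assumes "degree Q \<le> K" "1 \<le> poly Q (real s)"
    and small: "\<And>r. j \<le> r \<Longrightarrow> r < s \<Longrightarrow> \<bar>poly Q (real r)\<bar> \<le> 1 / 9"
  shows "s - j \<le> 4 * K ^ 2"
proof (rule ccontr)
  assume far: "\<not> s - j \<le> 4 * K ^ 2"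
  have "\<bar>poly Q (real s - quad_node i)\<bar> \<le> 1 / 9" if "i \<le> K" for i
  proof -
    have "4 * i ^ 2 \<le> 4 * K ^ 2" using that by (simp add: power_mono)
    hence "j \<le> s - (1 + 4 * i ^ 2)" "s - (1 + 4 * i ^ 2) < s" "1 + 4 * i ^ 2 \<le> s"
      using far by linarith+
    moreover from this have "real (s - (1 + 4 * i ^ 2)) = real s - quad_node i"
      by (simp add: quad_node_def of_nat_diff)
    ultimately show ?thesis using small by metis
  qed
  hence "\<bar>poly Q (real s)\<bar> \<le> 6 * (1 / 9)"
    using assms(1) by (intro abs_poly_le_at_quad_nodes[where c = "- 1"]) auto
  with assms(2) show False by simp
qed

lemma small_run_above_le:
  fixes Q :: "real poly"
  assumes "degree Q \<le> K" "1 \<le> poly Q (real s)"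
    and small: "\<And>r. s < r \<Longrightarrow> r \<le> j \<Longrightarrow> \<bar>poly Q (real r)\<bar> \<le> 1 / 9"
  shows "j - s \<le> 4 * K ^ 2"
proof (rule ccontr)
  assume far: "\<not> j - s \<le> 4 * K ^ 2"
  have "\<bar>poly Q (real s + quad_node i)\<bar> \<le> 1 / 9" if "i \<le> K" for i
  proof -
    have "4 * i ^ 2 \<le> 4 * K ^ 2" using that by (simp add: power_mono)
    hence "s < s + (1 + 4 * i ^ 2)" "s + (1 + 4 * i ^ 2) \<le> j"
      using far by linarith+
    moreover have "real (s + (1 + 4 * i ^ 2)) = real s + quad_node i"
      by (simp add: quad_node_def)
    ultimately show ?thesis using small by metis
  qed
  hence "\<bar>poly Q (real s)\<bar> \<le> 6 * (1 / 9)"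
    using assms(1) by (intro abs_poly_le_at_quad_nodes[where c = 1]) auto
  with assms(2) show False by simp
qed

lemma level_change_near:
  assumes p: "separates_levels p n F" and q: "separates_levels q n (\<lambda>k. \<not> F k)"
    and deg: "degree p \<le> K" "degree q \<le> K"
    and "j \<le> n" "a \<le> n" "F a \<noteq> F j"
  shows "\<exists>t\<in>level_changes F n. j \<le> t + 4 * K ^ 2 \<and> t \<le> j + 4 * K ^ 2"
proof -
  define dst where "dst r = (r - j) + (j - r)" for r :: nat
  obtain s where s: "s \<le> n" "F s \<noteq> F j"
    and nearest: "\<And>r. r \<le> n \<Longrightarrow> dst r < dst s \<Longrightarrow> F r = F j"
    using ex_has_least_nat[of "\<lambda>s. s \<le> n \<and> F s \<noteq> F j" a dst] assms(5-) by (metis not_le)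
  define Q where "Q = (if F j then q else p)"
  have deg_Q: "degree Q \<le> K"
    using deg by (simp add: Q_def)
  have Q_big: "1 \<le> poly Q (real s)"
    using p q s by (auto simp: Q_def separates_levels_def)
  have Q_small: "\<bar>poly Q (real r)\<bar> \<le> 1 / 9" if "r \<le> n" "dst r < dst s" for r
    using p q that nearest[OF that] by (auto simp: Q_def separates_levels_def)
  show ?thesis
  proof (cases "j < s")
    case True
    have "s - j \<le> 4 * K ^ 2"
      using deg_Q Q_big by (rule small_run_below_le) (use Q_small True s in \<open>auto simp: dst_def\<close>)
    moreover have "F (s - 1) = F j"
      using True s nearest[of "s - 1"] by (auto simp: dst_def)
    ultimately show ?thesis
      using True s by (intro bexI[of _ "s - 1"]) (auto simp: level_changes_def)
  next
    case False
    hence "s < j" using s by (cases "s = j") auto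
    have "j - s \<le> 4 * K ^ 2"
      using deg_Q Q_big by (rule small_run_above_le) (use Q_small \<open>j \<le> n\<close> in \<open>auto simp: dst_def\<close>)
    moreover have "F (Suc s) = F j"
      using \<open>s < j\<close> \<open>j \<le> n\<close> nearest[of "Suc s"] by (auto simp: dst_def)
    ultimately show ?thesis
      using \<open>s < j\<close> \<open>j \<le> n\<close> s by (intro bexI[of _ s]) (auto simp: level_changes_def)
  qed
qed

lemma separates_levels_length_bound:
  assumes p: "separates_levels p n F" and q: "separates_levels q n (\<lambda>k. \<not> F k)"
    and deg: "degree p \<le> K" "degree q \<le> K"
    and "a \<le> n" "b \<le> n" "F a \<noteq> F b"
  shows "n + 1 \<le> K * (8 * K ^ 2 + 1)"
proof -
  define M where "M = 4 * K ^ 2"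
  have "{..n} \<subseteq> (\<Union>t\<in>level_changes F n. {t - M..t + M})"
  proof
    fix j assume "j \<in> {..n}"
    moreover have "\<exists>c\<in>{a, b}. F c \<noteq> F j"
      using assms(7) by auto
    ultimately obtain t where "t \<in> level_changes F n" "j \<le> t + M" "t \<le> j + M"
      using level_change_near[OF p q deg] assms(5,6) unfolding M_def by blast
    thus "j \<in> (\<Union>t\<in>level_changes F n. {t - M..t + M})"
      by (intro UN_I[of t]) auto
  qed
  hence "card {..n} \<le> card (\<Union>t\<in>level_changes F n. {t - M..t + M})"
    by (intro card_mono) (auto simp: level_changes_def)
  also have "\<dots> \<le> (\<Sum>t\<in>level_changes F n. card {t - M..t + M})"
    by (rule card_UN_le) (simp add: level_changes_def)
  also have "\<dots> \<le> (\<Sum>t\<in>level_changes F n. 2 * M + 1)"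
    by (intro sum_mono) simp
  also have "\<dots> = card (level_changes F n) * (2 * M + 1)"
    by simp
  also have "\<dots> \<le> K * (2 * M + 1)"
    using card_level_changes_le_degree[OF p] deg(1) by (intro mult_right_mono) auto
  finally show ?thesis by (simp add: M_def)
qed

section \<open>Symmetrization\<close>

lemma sum_Pow_insert:
  assumes "finite A" "a \<notin> A"
  shows "(\<Sum>S\<in>Pow (insert a A). f S) = (\<Sum>S\<in>Pow A. f S) + (\<Sum>S\<in>Pow A. f (insert a S))"
proof -
  have "inj_on (insert a) (Pow A)"
    using assms(2) by (intro inj_onI) (metis PowD insert_ident subsetD)
  moreover have "Pow A \<inter> insert a ` Pow A = {}"
    using assms(2) by auto
  ultimately show ?thesis
    using assms(1) by (simp add: Pow_insert sum.union_disjoint sum.reindex)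
qed

lemma exists_subset_sum_eq:
  fixes g :: "'a set \<Rightarrow> 'b::ab_group_add"
  assumes "finite A"
  shows "\<exists>c. \<forall>X\<subseteq>A. (\<Sum>S\<in>Pow X. c S) = g X"
  using assms
proof (induction A arbitrary: g rule: finite_induct)
  case empty
  show ?case by (intro exI[of _ "\<lambda>_. g {}"]) auto
next
  case (insert a A)
  obtain c0 where c0: "\<And>X. X \<subseteq> A \<Longrightarrow> (\<Sum>S\<in>Pow X. c0 S) = g X"
    using insert.IH[of g] by blast
  obtain c1 where c1: "\<And>X. X \<subseteq> A \<Longrightarrow> (\<Sum>S\<in>Pow X. c1 S) = g (insert a X)"
    using insert.IH[of "\<lambda>X. g (insert a X)"] by blast
  define c where "c S = (if a \<in> S then c1 (S - {a}) - c0 (S - {a}) else c0 S)" for S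
  have "(\<Sum>S\<in>Pow X. c S) = g X" if "X \<subseteq> insert a A" for X
  proof (cases "a \<in> X")
    case True
    define Y where "Y = X - {a}"
    have Y: "Y \<subseteq> A" "X = insert a Y" "a \<notin> Y"
      using that True insert.hyps by (auto simp: Y_def)
    have fin: "finite Y"
      using Y(1) insert.hyps(1) by (rule finite_subset)
    have "S - {a} = S" if "S \<subseteq> Y" for S
      using that Y(3) by auto
    hence "(\<Sum>S\<in>Pow X. c S) = (\<Sum>S\<in>Pow Y. c0 S) + (\<Sum>S\<in>Pow Y. c1 S - c0 S)"
      unfolding Y(2) sum_Pow_insert[OF fin Y(3)] using Y(3)
      by (intro arg_cong2[where f = "(+)"] sum.cong) (auto simp: c_def)
    also have "\<dots> = g X"
      using c1[OF Y(1)] Y(2) by (simp add: sum_subtractf)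
    finally show ?thesis .
  next
    case False
    hence "X \<subseteq> A" using that by auto
    have "(\<Sum>S\<in>Pow X. c S) = (\<Sum>S\<in>Pow X. c0 S)"
      using False by (intro sum.cong) (auto simp: c_def)
    thus ?thesis using c0[OF \<open>X \<subseteq> A\<close>] by simp
  qed
  thus ?case by blast
qed

definition bits_of_set :: "nat \<Rightarrow> nat set \<Rightarrow> bool list" where
  "bits_of_set n B = map (\<lambda>i. i \<in> B) [0..<n]"

lemma length_bits_of_set [simp]: "length (bits_of_set n B) = n"
  by (simp add: bits_of_set_def)

lemma nth_bits_of_set [simp]: "i < n \<Longrightarrow> bits_of_set n B ! i = (i \<in> B)"
  by (simp add: bits_of_set_def)

lemma bits_of_set_ones: "length x = n \<Longrightarrow> bits_of_set n {i. i < n \<and> x ! i} = x"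
  by (intro nth_equalityI) auto

lemma hamming_weight_bits_of_set: "B \<subseteq> {0..<n} \<Longrightarrow> hamming_weight (bits_of_set n B) = card B"
  unfolding hamming_weight_def length_filter_conv_card
  by (intro arg_cong[where f = card]) auto

lemma mpoly_eval_bits_of_set:
  "mpoly_eval n c (bits_of_set n X) = (\<Sum>S\<in>Pow {0..<n}. c S * of_bool (S \<subseteq> X))"
  unfolding mpoly_eval_def
proof (intro sum.cong refl)
  fix S assume S: "S \<in> Pow {0..<n}"
  hence "(\<Prod>i\<in>S. if bits_of_set n X ! i then 1 else 0 :: real) = (\<Prod>i\<in>S. of_bool (i \<in> X))"
    by (intro prod.cong) auto
  also have "\<dots> = of_bool (S \<subseteq> X)"
    using finite_subset[of S "{0..<n}"] S by (induction S rule: infinite_finite_induct) auto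
  finally show "c S * (\<Prod>i\<in>S. if bits_of_set n X ! i then 1 else 0) = c S * of_bool (S \<subseteq> X)"
    by simp
qed

lemma N_attained:
  "\<exists>c. mpoly_deg_le n c (N n f) \<and> (\<forall>x. length x = n \<longrightarrow>
          (\<not> f x \<longrightarrow> \<bar>mpoly_eval n c x\<bar> \<le> 1/3) \<and> (f x \<longrightarrow> \<bar>mpoly_eval n c x\<bar> \<ge> 1))"
  unfolding N_def
proof (rule LeastI_ex)
  obtain c :: "nat set \<Rightarrow> real"
    where c: "\<And>X. X \<subseteq> {0..<n} \<Longrightarrow> (\<Sum>S\<in>Pow X. c S) = of_bool (f (bits_of_set n X))"
    using exists_subset_sum_eq[of "{0..<n}" "\<lambda>X. of_bool (f (bits_of_set n X)) :: real"] by blast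
  have "mpoly_eval n c x = of_bool (f x)" if "length x = n" for x
  proof -
    define X where "X = {i. i < n \<and> x ! i}"
    have "X \<subseteq> {0..<n}" by (auto simp: X_def)
    have x: "bits_of_set n X = x"
      unfolding X_def using that by (rule bits_of_set_ones)
    have "Pow {0..<n} \<inter> {S. S \<subseteq> X} = Pow X"
      using \<open>X \<subseteq> {0..<n}\<close> by auto
    hence "mpoly_eval n c (bits_of_set n X) = (\<Sum>S\<in>Pow X. c S)"
      by (simp add: mpoly_eval_bits_of_set)
    thus ?thesis
      using c[OF \<open>X \<subseteq> {0..<n}\<close>] by (simp only: x)
  qed
  moreover have "mpoly_deg_le n c n"
    by (auto simp: mpoly_deg_le_def intro: card_mono[of "{0..<n}", simplified])
  ultimately show "\<exists>d c. mpoly_deg_le n c d \<and> (\<forall>x. length x = n \<longrightarrow>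
          (\<not> f x \<longrightarrow> \<bar>mpoly_eval n c x\<bar> \<le> 1/3) \<and> (f x \<longrightarrow> \<bar>mpoly_eval n c x\<bar> \<ge> 1))"
    by (intro exI[of _ n] exI[of _ c]) auto
qed

lemma hamming_weight_le_length: "hamming_weight x \<le> length x"
  by (simp add: hamming_weight_def)

lemma symmetric_fun_eq_level:
  assumes "symmetric_fun n f" "length x = n"
  shows "f x = f (bits_of_set n {0..<hamming_weight x})"
proof -
  have "hamming_weight (bits_of_set n {0..<hamming_weight x}) = hamming_weight x"
    using assms(2) hamming_weight_le_length[of x] by (simp add: hamming_weight_bits_of_set)
  thus ?thesis
    using assms unfolding symmetric_fun_def by (metis length_bits_of_set)
qed

definition binomial_poly :: "nat \<Rightarrow> real poly" where
  "binomial_poly u = smult (1 / fact u) (\<Prod>i<u. [:- real i, 1:])"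

lemma poly_binomial_poly: "poly (binomial_poly u) (real k) = real (k choose u)"
  by (simp add: binomial_poly_def poly_prod binomial_gbinomial gbinomial_prod_rev atLeast0LessThan)

lemma degree_binomial_poly: "degree (binomial_poly u) = u"
  by (simp add: binomial_poly_def degree_prod_sum_eq)

lemma card_supersets_mult_choose:
  assumes "finite A" "U \<subseteq> A"
  shows "card {X. X \<subseteq> A \<and> card X = k \<and> U \<subseteq> X} * (card A choose card U)
         = (card A choose k) * (k choose card U)"
proof (cases "card U \<le> k \<and> k \<le> card A")
  case True
  define supersets where "supersets = {X. X \<subseteq> A \<and> card X = k \<and> U \<subseteq> X}"
  define rests where "rests = {Y. Y \<subseteq> A - U \<and> card Y = k - card U}"
  have "finite U" using assms by (rule finite_subset[rotated])
  have card_Un: "card (Y \<union> U) = card Y + card U" if "Y \<subseteq> A - U" for Y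
    using that assms \<open>finite U\<close> by (intro card_Un_disjoint) (auto intro: finite_subset)
  have "bij_betw (\<lambda>Y. Y \<union> U) rests supersets"
  proof (rule bij_betw_byWitness[where f' = "\<lambda>X. X - U"])
    show "(\<lambda>Y. Y \<union> U) ` rests \<subseteq> supersets"
      using True assms card_Un by (auto simp: rests_def supersets_def)
    show "(\<lambda>X. X - U) ` supersets \<subseteq> rests"
      using \<open>finite U\<close> by (auto simp: card_Diff_subset rests_def supersets_def)
  qed (auto simp: rests_def supersets_def)
  hence "card supersets = card rests"
    by (rule bij_betw_same_card[symmetric])
  also have "\<dots> = card (A - U) choose (k - card U)"
    unfolding rests_def using assms by (intro n_subsets) simp
  also have "card (A - U) = card A - card U"
    using assms \<open>finite U\<close> by (simp add: card_Diff_subset)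
  finally show ?thesis
    using choose_mult[of "card U" k "card A"] True by (simp add: supersets_def mult.commute)
next
  case False
  have "card X \<le> card A" "card U \<le> card X" if "X \<subseteq> A" "U \<subseteq> X" for X
    using that assms by (auto intro: card_mono finite_subset)
  hence "{X. X \<subseteq> A \<and> card X = k \<and> U \<subseteq> X} = {}"
    using False by fastforce
  hence "card {X. X \<subseteq> A \<and> card X = k \<and> U \<subseteq> X} = 0"
    by (simp only: card.empty)
  thus ?thesis using False by auto
qed

(* The mean of p^2 over the k-th slice, p = mpoly_eval n c: p(X)^2 is the sum of c S * c T over
   S \<union> T \<subseteq> X, and a set U lies in C(n,k) C(k,|U|) / C(n,|U|) of the k-subsets of {0..<n}. *)
definition sym_square_poly :: "nat \<Rightarrow> (nat set \<Rightarrow> real) \<Rightarrow> real poly" where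
  "sym_square_poly n c = (\<Sum>S\<in>Pow {0..<n}. \<Sum>T\<in>Pow {0..<n}.
      smult (c S * c T / real (n choose card (S \<union> T))) (binomial_poly (card (S \<union> T))))"

lemma degree_sym_square_poly:
  assumes "mpoly_deg_le n c d"
  shows "degree (sym_square_poly n c) \<le> 2 * d"
  unfolding sym_square_poly_def
proof (intro degree_sum_le)
  fix S T assume "S \<in> Pow {0..<n}" "T \<in> Pow {0..<n}"
  show "degree (smult (c S * c T / real (n choose card (S \<union> T))) (binomial_poly (card (S \<union> T)))) \<le> 2 * d"
  proof (cases "c S = 0 \<or> c T = 0")
    case False
    hence "card S \<le> d" "card T \<le> d"
      using assms \<open>S \<in> Pow {0..<n}\<close> \<open>T \<in> Pow {0..<n}\<close> by (auto simp: mpoly_deg_le_def)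
    hence "card (S \<union> T) \<le> 2 * d"
      using card_Un_le[of S T] by linarith
    thus ?thesis
      by (metis degree_binomial_poly degree_smult_le order_trans)
  qed auto
qed auto

definition slice :: "nat \<Rightarrow> nat \<Rightarrow> nat set set" where
  "slice n k = {X. X \<subseteq> {0..<n} \<and> card X = k}"

lemma finite_slice [simp]: "finite (slice n k)"
  unfolding slice_def by (rule finite_subset[of _ "Pow {0..<n}"]) auto

lemma card_slice: "card (slice n k) = n choose k"
  unfolding slice_def using n_subsets[of "{0..<n}" k] by simp

lemma sum_slice_of_bool_superset:
  assumes "U \<subseteq> {0..<n}"
  shows "(\<Sum>X\<in>slice n k. of_bool (U \<subseteq> X))
         = real (n choose k) * real (k choose card U) / real (n choose card U)"
proof -
  have "card U \<le> n"
    using card_mono[OF _ assms] by simp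
  moreover have "slice n k \<inter> {X. U \<subseteq> X} = {X. X \<subseteq> {0..<n} \<and> card X = k \<and> U \<subseteq> X}"
    by (auto simp: slice_def)
  moreover have "card {X. X \<subseteq> {0..<n} \<and> card X = k \<and> U \<subseteq> X} * (n choose card U)
      = (n choose k) * (k choose card U)"
    using card_supersets_mult_choose[OF _ assms, of k] by simp
  ultimately show ?thesis
    by (simp add: field_simps flip: of_nat_mult)
qed

lemma sum_slice_square_mpoly_eval:
  "(\<Sum>X\<in>slice n k. (mpoly_eval n c (bits_of_set n X))\<^sup>2)
     = real (n choose k) * poly (sym_square_poly n c) (real k)"
proof -
  define A where "A = {0..<n}"
  have square: "(mpoly_eval n c (bits_of_set n X))\<^sup>2
      = (\<Sum>S\<in>Pow A. \<Sum>T\<in>Pow A. c S * c T * of_bool (S \<union> T \<subseteq> X))" for X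
    unfolding mpoly_eval_bits_of_set power2_eq_square A_def sum_product
    by (intro sum.cong refl) auto
  have "(\<Sum>X\<in>slice n k. (mpoly_eval n c (bits_of_set n X))\<^sup>2)
      = (\<Sum>X\<in>slice n k. \<Sum>S\<in>Pow A. \<Sum>T\<in>Pow A. c S * c T * of_bool (S \<union> T \<subseteq> X))"
    by (simp only: square)
  also have "\<dots> = (\<Sum>S\<in>Pow A. \<Sum>T\<in>Pow A. c S * c T * (\<Sum>X\<in>slice n k. of_bool (S \<union> T \<subseteq> X)))"
    unfolding sum_distrib_left by (rule trans[OF sum.swap]) (intro sum.cong refl sum.swap)
  also have "\<dots> = (\<Sum>S\<in>Pow A. \<Sum>T\<in>Pow A. c S * c T *
      (real (n choose k) * real (k choose card (S \<union> T)) / real (n choose card (S \<union> T))))"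
    by (intro sum.cong refl) (subst sum_slice_of_bool_superset, auto simp: A_def)
  also have "\<dots> = real (n choose k) * poly (sym_square_poly n c) (real k)"
    by (simp add: sym_square_poly_def poly_sum poly_binomial_poly sum_distrib_left A_def mult_ac)
  finally show ?thesis .
qed

lemma separates_levels_sym_square_poly:
  assumes sym: "symmetric_fun n f"
    and approx: "\<forall>x. length x = n \<longrightarrow>
          (\<not> f x \<longrightarrow> \<bar>mpoly_eval n c x\<bar> \<le> 1/3) \<and> (f x \<longrightarrow> \<bar>mpoly_eval n c x\<bar> \<ge> 1)"
  shows "separates_levels (sym_square_poly n c) n (\<lambda>k. f (bits_of_set n {0..<k}))"
  unfolding separates_levels_def
proof (intro allI impI)
  fix k assume "k \<le> n"
  define v where "v X = mpoly_eval n c (bits_of_set n X)" for X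
  let ?level = "f (bits_of_set n {0..<k})"
  have card_pos: "real (card (slice n k)) > 0"
    using \<open>k \<le> n\<close> by (simp add: card_slice)
  have sum_sq: "(\<Sum>X\<in>slice n k. (v X)\<^sup>2) = real (card (slice n k)) * poly (sym_square_poly n c) (real k)"
    unfolding v_def card_slice by (rule sum_slice_square_mpoly_eval)
  have level: "f (bits_of_set n X) = ?level" if "X \<in> slice n k" for X
    using symmetric_fun_eq_level[OF sym, of "bits_of_set n X"] that
    by (simp add: slice_def hamming_weight_bits_of_set)
  have sq_ge: "1 \<le> (v X)\<^sup>2" if "X \<in> slice n k" "?level" for X
    using approx level[OF that(1)] that(2) abs_le_square_iff[of 1 "v X"] by (simp add: v_def)
  have sq_le: "(v X)\<^sup>2 \<le> 1 / 9" if "X \<in> slice n k" "\<not> ?level" for X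
    using approx level[OF that(1)] that(2) abs_le_square_iff[of "v X" "1 / 3"]
    by (simp add: v_def power_divide)
  show "(?level \<longrightarrow> 1 \<le> poly (sym_square_poly n c) (real k)) \<and>
        (\<not> ?level \<longrightarrow> \<bar>poly (sym_square_poly n c) (real k)\<bar> \<le> 1 / 9)"
  proof (intro conjI impI)
    assume ?level
    hence "real (card (slice n k)) * 1 \<le> (\<Sum>X\<in>slice n k. (v X)\<^sup>2)"
      using sq_ge by (intro sum_bounded_below) auto
    thus "1 \<le> poly (sym_square_poly n c) (real k)"
      using card_pos sum_sq by simp
  next
    assume "\<not> ?level"
    hence "(\<Sum>X\<in>slice n k. (v X)\<^sup>2) \<le> real (card (slice n k)) * (1 / 9)"
      using sq_le by (intro sum_bounded_above) auto
    moreover have "0 \<le> (\<Sum>X\<in>slice n k. (v X)\<^sup>2)"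
      by (simp add: sum_nonneg)
    moreover have "slice n k \<noteq> {}"
      using card_pos by auto
    ultimately show "\<bar>poly (sym_square_poly n c) (real k)\<bar> \<le> 1 / 9"
      using card_pos sum_sq by (simp add: zero_le_mult_iff)
  qed
qed

lemma symmetric_fun_length_bound:
  assumes sym: "symmetric_fun n f"
    and x: "length x = n" and y: "length y = n" and "f x \<noteq> f y"
    and d: "N n f \<le> d" "N n (\<lambda>x. \<not> f x) \<le> d"
  shows "n + 1 \<le> 2 * d * (8 * (2 * d) ^ 2 + 1)"
proof -
  define F where "F k = f (bits_of_set n {0..<k})" for k
  have sym': "symmetric_fun n (\<lambda>x. \<not> f x)"
    using sym unfolding symmetric_fun_def by blast
  obtain c where c: "mpoly_deg_le n c (N n f)" and c_approx: "\<forall>x. length x = n \<longrightarrow>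
      (\<not> f x \<longrightarrow> \<bar>mpoly_eval n c x\<bar> \<le> 1/3) \<and> (f x \<longrightarrow> \<bar>mpoly_eval n c x\<bar> \<ge> 1)"
    using N_attained[of n f] by blast
  obtain c' where c': "mpoly_deg_le n c' (N n (\<lambda>x. \<not> f x))" and c'_approx: "\<forall>x. length x = n \<longrightarrow>
      (\<not> \<not> f x \<longrightarrow> \<bar>mpoly_eval n c' x\<bar> \<le> 1/3) \<and> (\<not> f x \<longrightarrow> \<bar>mpoly_eval n c' x\<bar> \<ge> 1)"
    using N_attained[of n "\<lambda>x. \<not> f x"] by blast
  have "separates_levels (sym_square_poly n c) n F"
    unfolding F_def using sym c_approx by (rule separates_levels_sym_square_poly)
  moreover have "separates_levels (sym_square_poly n c') n (\<lambda>k. \<not> F k)"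
    unfolding F_def using sym' c'_approx by (rule separates_levels_sym_square_poly)
  moreover have "degree (sym_square_poly n c) \<le> 2 * d" "degree (sym_square_poly n c') \<le> 2 * d"
    using degree_sym_square_poly[OF c] degree_sym_square_poly[OF c'] d by linarith+
  moreover have "hamming_weight x \<le> n" "hamming_weight y \<le> n"
    using hamming_weight_le_length x y by metis+
  moreover have "F (hamming_weight x) \<noteq> F (hamming_weight y)"
    using symmetric_fun_eq_level[OF sym x] symmetric_fun_eq_level[OF sym y] \<open>f x \<noteq> f y\<close>
    by (simp add: F_def)
  ultimately show ?thesis
    by (rule separates_levels_length_bound)
qed

lemma symmetric_fun_length_le:
  assumes "symmetric_fun n f" "length x = n" "length y = n" "f x \<noteq> f y"
    and "N n f \<le> d" "N n (\<lambda>x. \<not> f x) \<le> d"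
  shows "n \<le> 66 * d ^ 6"
proof -
  have "n + 1 \<le> 2 * d * (8 * (2 * d) ^ 2 + 1)"
    using assms by (rule symmetric_fun_length_bound)
  also have "\<dots> = 64 * d ^ 3 + 2 * d"
    by (simp add: power2_eq_square power3_eq_cube algebra_simps)
  also have "\<dots> \<le> 66 * d ^ 6"
  proof (cases "d = 0")
    case False
    hence "d \<le> d ^ 3" "d ^ 3 \<le> d ^ 6"
      using power_increasing[of 1 3 d] power_increasing[of 3 6 d] by simp_all
    thus ?thesis by linarith
  qed simp
  finally show ?thesis by simp
qed

section \<open>Decision trees\<close>

fun full_dtree :: "(bool list \<Rightarrow> bool) \<Rightarrow> nat \<Rightarrow> bool list \<Rightarrow> dtree" where
  "full_dtree f 0 prefix = Leaf (f prefix)"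
| "full_dtree f (Suc m) prefix =
     Node (length prefix) (full_dtree f m (prefix @ [False])) (full_dtree f m (prefix @ [True]))"

lemma dt_depth_full_dtree: "dt_depth (full_dtree f m prefix) = m"
  by (induction m arbitrary: prefix) auto

lemma dt_valid_full_dtree: "dt_valid (length prefix + m) (full_dtree f m prefix)"
proof (induction m arbitrary: prefix)
  case (Suc m)
  have "dt_valid (length prefix + Suc m) (full_dtree f m (prefix @ [b]))" for b
    using Suc.IH[of "prefix @ [b]"] by simp
  thus ?case by simp
qed simp

lemma dt_eval_full_dtree:
  "length x = length prefix + m \<Longrightarrow> take (length prefix) x = prefix \<Longrightarrow>
     dt_eval (full_dtree f m prefix) x = f x"
proof (induction m arbitrary: prefix)
  case 0
  thus ?case by simp
next
  case (Suc m)
  have "take (length (prefix @ [x ! length prefix])) x = prefix @ [x ! length prefix]"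
    using Suc.prems by (simp add: take_Suc_conv_app_nth)
  thus ?case
    using Suc.IH[of "prefix @ [x ! length prefix]"] Suc.prems by (cases "x ! length prefix") auto
qed

lemma D_le_dt_depth:
  "dt_valid n t \<Longrightarrow> (\<And>x. length x = n \<Longrightarrow> dt_eval t x = f x) \<Longrightarrow> D n f \<le> dt_depth t"
  unfolding D_def by (rule Least_le) blast

lemma D_le_length: "D n f \<le> n"
  using D_le_dt_depth[of n "full_dtree f n []" f] dt_valid_full_dtree[of "[]" n f]
    dt_eval_full_dtree[of _ "[]" n f]
  by (simp add: dt_depth_full_dtree)

lemma D_eq_0_if_constant:
  assumes "\<And>x. length x = n \<Longrightarrow> f x = b"
  shows "D n f = 0"
  using D_le_dt_depth[of n "Leaf b" f] assms by simp

theorem corollary3p16: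
  shows "\<exists>C::real. \<forall>(n::nat) (f::bool list \<Rightarrow> bool). symmetric_fun n f \<longrightarrow>
     real (D n f) \<le> C * max (real (N n f) ^ 6) (real (N n (\<lambda>x. \<not> f x)) ^ 6)"
proof (intro exI[of _ 66] allI impI)
  fix n and f :: "bool list \<Rightarrow> bool"
  assume sym: "symmetric_fun n f"
  define m where "m = max (N n f) (N n (\<lambda>x. \<not> f x))"
  have "max (real (N n f) ^ 6) (real (N n (\<lambda>x. \<not> f x)) ^ 6) = real (m ^ 6)"
    by (simp add: m_def max_def power_mono)
  moreover have "D n f \<le> 66 * m ^ 6"
  proof (cases "\<exists>x y. length x = n \<and> length y = n \<and> f x \<noteq> f y")
    case True
    then obtain x y where "length x = n" "length y = n" "f x \<noteq> f y"
      by blast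
    with sym have "n \<le> 66 * m ^ 6"
      by (intro symmetric_fun_length_le) (auto simp: m_def)
    thus ?thesis
      using D_le_length[of n f] by linarith
  next
    case False
    hence "D n f = 0"
      by (intro D_eq_0_if_constant[of n f "f (replicate n False)"]) (metis length_replicate)
    thus ?thesis by simp
  qed
  hence "real (D n f) \<le> real (66 * m ^ 6)"
    by (simp only: of_nat_le_iff)
  ultimately show "real (D n f) \<le> 66 * max (real (N n f) ^ 6) (real (N n (\<lambda>x. \<not> f x)) ^ 6)"
    by simp
qed

end
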